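(* Every ice fork with exactly two frozen vertices is a brog quiver.
   Context: A quiver is a finite directed multigraph with no loops and no oriented 2-cycles, whose vertex set is partitioned into mutable and frozen vertices; arrows between two frozen vertices are ignored. $b_{ik}$ = number of arrows $i\to k$ minus number of arrows $k\to i$; mutable vertices are labelled $[n]$; $Q|_S$ is the induced subquiver on $S$. Abundant: at least 2 arrows between every pair of vertices at least one of which is mutable. $F^+(r)=\{i: r\to i\}$, $F^-(r)=\{j:j\to r\}$. A fork is an abundant non-acyclic quiver with at most one frozen vertex and a vertex $r$ (point of return) such that $b_{ij}>b_{ri}$ and $b_{ij}>b_{jr}$ for all $i\in F^+(r),j\in F^-(r)$, and the subquivers induced on $F^+(r)$ and $F^-(r)$ are acyclic. An ice fork with point of return $r$ is a quiver with mutable vertices $[n]$ and frozen vertices $u_1,\dots,u_m$ ($m\ge1$) such that each $Q|_{[n]\cup\{u_i\}}$ is a fork with point of return $r$. A mutable vertex adjacent to at least one frozen vertex is red (resp. green) if all arrows between it and frozen vertices point towards (resp. away from) it. Two mutable vertices $i,j$ are complementary if for every frozen vertex $u$ with $b_{iu}\ne0$ and $b_{ju}\ne0$, $b_{iu}$ and $b_{ju}$ have opposite signs. A quiver is brog if its mutable vertices can be coloured blue, red, orange and green such that: (1) the vertices coloured red are exactly the red vertices; (2) the vertices coloured green are exactly the green vertices; (3) each blue vertex $i$ has $b_{ij}\ge0$ for every red $j$ and $b_{ij}\le0$ for every green $j$; (4) each orange vertex $i$ has $b_{ij}\ge0$ for every green $j$ and $b_{ij}\le0$ for every red $j$; (5)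 every blue vertex and every orange vertex are complementary. *)

theory Defs
  imports Main
begin

text \<open>A quiver is encoded by its set of mutable vertices M, its set of frozen
vertices F and its exchange matrix b (b i k = #arrows i->k minus #arrows k->i).
Arrows between two frozen vertices are ignored throughout.\<close>

definition quiver :: "'v set \<Rightarrow> 'v set \<Rightarrow> ('v \<Rightarrow> 'v \<Rightarrow> int) \<Rightarrow> bool" where
  "quiver M F b \<longleftrightarrow> finite M \<and> finite F \<and> M \<inter> F = {} \<and>
     (\<forall>i j. b i j = - b j i)"

definition arr :: "'v set \<Rightarrow> ('v \<Rightarrow> 'v \<Rightarrow> int) \<Rightarrow> 'v \<Rightarrow> 'v \<Rightarrow> bool" where
  "arr M b i j \<longleftrightarrow> b i j > 0 \<and> (i \<in> M \<or> j \<in> M)"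

definition acyclic_on :: "'v set \<Rightarrow> ('v \<Rightarrow> 'v \<Rightarrow> int) \<Rightarrow> 'v set \<Rightarrow> bool" where
  "acyclic_on M b S \<longleftrightarrow> acyclic {(i, j). i \<in> S \<and> j \<in> S \<and> arr M b i j}"

definition abundant :: "'v set \<Rightarrow> 'v set \<Rightarrow> ('v \<Rightarrow> 'v \<Rightarrow> int) \<Rightarrow> bool" where
  "abundant M F b \<longleftrightarrow> (\<forall>i \<in> M \<union> F. \<forall>j \<in> M \<union> F. i \<noteq> j \<and> (i \<in> M \<or> j \<in> M) \<longrightarrow> \<bar>b i j\<bar> \<ge> 2)"

definition Fplus :: "'v set \<Rightarrow> 'v set \<Rightarrow> ('v \<Rightarrow> 'v \<Rightarrow> int) \<Rightarrow> 'v \<Rightarrow> 'v set" where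
  "Fplus M F b r = {i \<in> M \<union> F. arr M b r i}"

definition Fminus :: "'v set \<Rightarrow> 'v set \<Rightarrow> ('v \<Rightarrow> 'v \<Rightarrow> int) \<Rightarrow> 'v \<Rightarrow> 'v set" where
  "Fminus M F b r = {j \<in> M \<union> F. arr M b j r}"

definition fork :: "'v set \<Rightarrow> 'v set \<Rightarrow> ('v \<Rightarrow> 'v \<Rightarrow> int) \<Rightarrow> 'v \<Rightarrow> bool" where
  "fork M F b r \<longleftrightarrow> quiver M F b \<and> abundant M F b \<and> \<not> acyclic_on M b (M \<union> F) \<and>
     card F \<le> 1 \<and> r \<in> M \<union> F \<and>
     (\<forall>i \<in> Fplus M F b r. \<forall>j \<in> Fminus M F b r. b i j > b r i \<and> b i j > b j r) \<and>
     acyclic_on M b (Fplus M F b r) \<and> acyclic_on M b (Fminus M F b r)"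

definition ice_fork :: "'v set \<Rightarrow> 'v set \<Rightarrow> ('v \<Rightarrow> 'v \<Rightarrow> int) \<Rightarrow> 'v \<Rightarrow> bool" where
  "ice_fork M F b r \<longleftrightarrow> quiver M F b \<and> F \<noteq> {} \<and> (\<forall>u \<in> F. fork M {u} b r)"

definition red_vertex :: "'v set \<Rightarrow> 'v set \<Rightarrow> ('v \<Rightarrow> 'v \<Rightarrow> int) \<Rightarrow> 'v \<Rightarrow> bool" where
  "red_vertex M F b i \<longleftrightarrow> i \<in> M \<and> (\<exists>u \<in> F. b i u \<noteq> 0) \<and> (\<forall>u \<in> F. b i u \<le> 0)"

definition green_vertex :: "'v set \<Rightarrow> 'v set \<Rightarrow> ('v \<Rightarrow> 'v \<Rightarrow> int) \<Rightarrow> 'v \<Rightarrow> bool" where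
  "green_vertex M F b i \<longleftrightarrow> i \<in> M \<and> (\<exists>u \<in> F. b i u \<noteq> 0) \<and> (\<forall>u \<in> F. b i u \<ge> 0)"

definition complementary :: "'v set \<Rightarrow> ('v \<Rightarrow> 'v \<Rightarrow> int) \<Rightarrow> 'v \<Rightarrow> 'v \<Rightarrow> bool" where
  "complementary F b i j \<longleftrightarrow> (\<forall>u \<in> F. b i u \<noteq> 0 \<and> b j u \<noteq> 0 \<longrightarrow> b i u * b j u < 0)"

datatype colour = Blue | Red | Orange | Green

definition brog :: "'v set \<Rightarrow> 'v set \<Rightarrow> ('v \<Rightarrow> 'v \<Rightarrow> int) \<Rightarrow> bool" where
  "brog M F b \<longleftrightarrow> (\<exists>c :: 'v \<Rightarrow> colour.
     (\<forall>i \<in> M. c i = Red \<longleftrightarrow> red_vertex M F b i) \<and>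
     (\<forall>i \<in> M. c i = Green \<longleftrightarrow> green_vertex M F b i) \<and>
     (\<forall>i \<in> M. c i = Blue \<longrightarrow> (\<forall>j \<in> M. c j = Red \<longrightarrow> b i j \<ge> 0) \<and>
                                 (\<forall>j \<in> M. c j = Green \<longrightarrow> b i j \<le> 0)) \<and>
     (\<forall>i \<in> M. c i = Orange \<longrightarrow> (\<forall>j \<in> M. c j = Green \<longrightarrow> b i j \<ge> 0) \<and>
                                   (\<forall>j \<in> M. c j = Red \<longrightarrow> b i j \<le> 0)) \<and>
     (\<forall>i \<in> M. \<forall>j \<in> M. c i = Blue \<and> c j = Orange \<longrightarrow> complementary F b i j))"

end

theory Submission
  imports Defs
begin

(* Colour the red and green vertices as forced, the point of return r orange and every other
   mutable vertex blue. Each subquiver on the mutable vertices and one frozen vertex u is a fork,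
   so there every out-neighbour of r points to every in-neighbour of r, and no oriented 3-cycle
   avoids r (it would lie inside the acyclic F+(r) or F-(r)). An arrow from a red j other than r
   to a blue i would close such a 3-cycle i -> u -> j -> i through a frozen u with i -> u; the
   remaining sign conditions follow directly from the first property. Complementarity of a blue
   i with r is where the two frozen vertices are needed: if i and r both pointed to w, the other
   frozen vertex v would point to both, and either orientation of the edge between i and r
   contradicts the fork at v or at w. Reversing all arrows preserves ice forks and swaps red and
   green, which halves the case analyses. *)

lemma acyclic_on_no_3cycle:
  assumes "acyclic_on M b S" "x \<in> S" "y \<in> S" "z \<in> S"
    and "arr M b x y" "arr M b y z" "arr M b z x"
  shows False
proof -
  let ?R = "{(i, j). i \<in> S \<and> j \<in> S \<and> arr M b i j}"
  have "(x, y) \<in> ?R" "(y, z) \<in> ?R" "(z, x) \<in> ?R"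
    using assms by auto
  then have "(x, x) \<in> ?R\<^sup>+"
    by (meson trancl.trancl_into_trancl r_into_trancl)
  then show False
    using assms(1) unfolding acyclic_on_def acyclic_def by blast
qed

lemma fork_antisym: "fork M F b r \<Longrightarrow> b x y = - b y x"
  unfolding fork_def quiver_def by blast

lemma fork_not_both_frozen:
  assumes "fork M F b r" "x \<in> M \<union> F" "y \<in> M \<union> F" "x \<noteq> y"
  shows "x \<in> M \<or> y \<in> M"
proof -
  have "finite F" "card F \<le> 1"
    using assms(1) unfolding fork_def quiver_def by auto
  then have "\<not> (x \<in> F \<and> y \<in> F)"
    using assms(4) by (metis One_nat_def card_le_Suc0_iff_eq)
  then show ?thesis
    using assms(2,3) by blast
qed

lemma fork_adjacent:
  assumes "fork M F b r" "x \<in> M \<union> F" "y \<in> M \<union> F" "x \<noteq> y"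
  shows "b x y \<noteq> 0"
proof -
  have "\<bar>b x y\<bar> \<ge> 2"
    using assms fork_not_both_frozen[OF assms] unfolding fork_def abundant_def by blast
  then show ?thesis by auto
qed

lemma fork_arr:
  assumes "fork M F b r" "x \<in> M \<union> F" "y \<in> M \<union> F" "b x y > 0"
  shows "arr M b x y"
proof -
  have "x \<noteq> y"
    using assms(4) fork_antisym[OF assms(1), of x x] by auto
  then show ?thesis
    using fork_not_both_frozen[OF assms(1-3)] assms(4) unfolding arr_def by blast
qed

lemma fork_out_in_arrow:
  assumes f: "fork M F b r" and "x \<in> M \<union> F" "y \<in> M \<union> F" "b r x > 0" "b y r > 0"
  shows "b x y > 0"
proof -
  have r: "r \<in> M \<union> F"
    using f unfolding fork_def by blast
  have "x \<in> Fplus M F b r" "y \<in> Fminus M F b r"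
    using assms r fork_arr[OF f] unfolding Fplus_def Fminus_def by auto
  then have "b x y > b r x"
    using f unfolding fork_def by blast
  with \<open>b r x > 0\<close> show ?thesis by linarith
qed

lemma arr_uminus:
  assumes "\<And>i j. b i j = - b j i"
  shows "arr M (- b) x y \<longleftrightarrow> arr M b y x"
  using assms[of x y] unfolding arr_def by auto

lemma acyclic_on_uminus:
  assumes "\<And>i j. b i j = - b j i"
  shows "acyclic_on M (- b) S \<longleftrightarrow> acyclic_on M b S"
proof -
  have "{(i, j). i \<in> S \<and> j \<in> S \<and> arr M (- b) i j} = {(i, j). i \<in> S \<and> j \<in> S \<and> arr M b i j}\<inverse>"
    using arr_uminus[of b M, OF assms] by auto
  then show ?thesis
    unfolding acyclic_on_def by simp
qed

lemma quiver_uminus: "quiver M F b \<Longrightarrow> quiver M F (- b)"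
  unfolding quiver_def by (metis uminus_apply)

lemma fork_uminus:
  assumes f: "fork M F b r"
  shows "fork M F (- b) r"
proof -
  have anti: "\<And>i j. b i j = - b j i"
    using fork_antisym[OF f] .
  have Fs: "Fplus M F (- b) r = Fminus M F b r" "Fminus M F (- b) r = Fplus M F b r"
    unfolding Fplus_def Fminus_def arr_uminus[of b M, OF anti] by auto
  have "\<forall>i \<in> Fplus M F (- b) r. \<forall>j \<in> Fminus M F (- b) r. (- b) i j > (- b) r i \<and> (- b) i j > (- b) j r"
  proof (intro ballI)
    fix i j
    assume "i \<in> Fplus M F (- b) r" "j \<in> Fminus M F (- b) r"
    then have "b j i > b r j \<and> b j i > b i r"
      using f unfolding Fs fork_def by blast
    then show "(- b) i j > (- b) r i \<and> (- b) i j > (- b) j r"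
      using anti[of j i] anti[of i r] anti[of r j] by simp
  qed
  moreover have "quiver M F (- b)"
    using f quiver_uminus unfolding fork_def by blast
  moreover have "abundant M F (- b)"
    using f unfolding fork_def abundant_def by simp
  ultimately show ?thesis
    using f unfolding fork_def acyclic_on_uminus[of b M, OF anti] Fs by blast
qed

lemma fork_no_3cycle_from_return:
  assumes f: "fork M F b r"
    and V: "x \<in> M \<union> F" "y \<in> M \<union> F" "z \<in> M \<union> F" "r \<notin> {x, y, z}"
    and "b r x > 0" and cyc: "b x y > 0" "b y z > 0" "b z x > 0"
  shows False
proof -
  have r: "r \<in> M \<union> F"
    using f unfolding fork_def by blast
  have step: "b r q > 0" if "b r p > 0" "b q p > 0" "p \<in> M \<union> F" "q \<in> M \<union> F" "q \<noteq> r" for p q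
  proof (rule ccontr)
    assume "\<not> b r q > 0"
    then have "b q r > 0"
      using fork_adjacent[OF f r \<open>q \<in> M \<union> F\<close>] \<open>q \<noteq> r\<close> fork_antisym[OF f, of q r] by force
    then have "b p q > 0"
      using fork_out_in_arrow[OF f \<open>p \<in> M \<union> F\<close> \<open>q \<in> M \<union> F\<close> \<open>b r p > 0\<close>] by blast
    then show False
      using \<open>b q p > 0\<close> fork_antisym[OF f, of p q] by linarith
  qed
  have "b r z > 0" "b r y > 0"
    using step[of x z] step[of z y] assms by auto
  then have "x \<in> Fplus M F b r" "y \<in> Fplus M F b r" "z \<in> Fplus M F b r"
    using \<open>b r x > 0\<close> V fork_arr[OF f r] unfolding Fplus_def by auto
  moreover have "acyclic_on M b (Fplus M F b r)"
    using f unfolding fork_def by blast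
  ultimately show False
    using acyclic_on_no_3cycle fork_arr[OF f] V cyc by metis
qed

lemma fork_no_3cycle_avoiding_return:
  assumes f: "fork M F b r"
    and V: "x \<in> M \<union> F" "y \<in> M \<union> F" "z \<in> M \<union> F" "r \<notin> {x, y, z}"
    and cyc: "b x y > 0" "b y z > 0" "b z x > 0"
  shows False
proof (cases "b r x > 0")
  case True
  then show False
    using fork_no_3cycle_from_return[OF f V] cyc by blast
next
  case False
  have "b r x \<noteq> 0"
    using fork_adjacent[OF f] f V unfolding fork_def by auto
  with False have "(- b) r x > 0"
    by simp
  moreover have "(- b) x z > 0" "(- b) z y > 0" "(- b) y x > 0"
    using cyc fork_antisym[OF f] by (metis neg_less_0_iff_less uminus_apply)+
  ultimately show False
    using fork_no_3cycle_from_return[OF fork_uminus[OF f], of x z y] V by auto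
qed

lemma ice_fork_forkD: "ice_fork M F b r \<Longrightarrow> u \<in> F \<Longrightarrow> fork M {u} b r"
  unfolding ice_fork_def by blast

lemma ice_fork_antisym: "ice_fork M F b r \<Longrightarrow> b x y = - b y x"
  unfolding ice_fork_def quiver_def by blast

lemma ice_fork_disjoint: "ice_fork M F b r \<Longrightarrow> M \<inter> F = {}"
  unfolding ice_fork_def quiver_def by blast

lemma ice_fork_uminus: "ice_fork M F b r \<Longrightarrow> ice_fork M F (- b) r"
  using quiver_uminus[of M F b] fork_uminus[of M _ b r] unfolding ice_fork_def by blast

lemma ice_fork_return_mutable:
  assumes "ice_fork M F b r" "card F \<ge> 2"
  shows "r \<in> M"
proof -
  have "finite F"
    using assms(2) card.infinite by force
  then obtain u v where "u \<in> F" "v \<in> F" "u \<noteq> v"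
    using assms(2) card_le_Suc0_iff_eq[of F] by auto
  moreover have "r \<in> M \<union> {w}" if "w \<in> F" for w
    using ice_fork_forkD[OF assms(1) that] unfolding fork_def by blast
  ultimately show ?thesis
    by blast
qed

lemma ice_fork_frozen_adjacent:
  assumes "ice_fork M F b r" "i \<in> M" "u \<in> F"
  shows "b i u \<noteq> 0"
proof -
  have "i \<noteq> u"
    using assms(2,3) ice_fork_disjoint[OF assms(1)] by blast
  then show ?thesis
    using fork_adjacent[OF ice_fork_forkD[OF assms(1,3)]] assms(2) by blast
qed

lemma red_vertex_uminus [simp]: "red_vertex M F (- b) i \<longleftrightarrow> green_vertex M F b i"
  unfolding red_vertex_def green_vertex_def by auto

lemma green_vertex_uminus [simp]: "green_vertex M F (- b) i \<longleftrightarrow> red_vertex M F b i"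
  unfolding red_vertex_def green_vertex_def by auto

lemma ice_fork_red_vertex_iff:
  assumes "ice_fork M F b r" "i \<in> M"
  shows "red_vertex M F b i \<longleftrightarrow> (\<forall>u \<in> F. b i u < 0)"
proof -
  have "F \<noteq> {}"
    using assms(1) unfolding ice_fork_def by blast
  then show ?thesis
    using assms(2) ice_fork_frozen_adjacent[OF assms] unfolding red_vertex_def
    by (metis all_not_in_conv less_le not_less)
qed

lemma ice_fork_green_vertex_iff:
  assumes "ice_fork M F b r" "i \<in> M"
  shows "green_vertex M F b i \<longleftrightarrow> (\<forall>u \<in> F. b i u > 0)"
  using ice_fork_red_vertex_iff[OF ice_fork_uminus[OF assms(1)] assms(2)] by simp

lemma ice_fork_not_red_vertex_iff:
  assumes "ice_fork M F b r" "i \<in> M"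
  shows "\<not> red_vertex M F b i \<longleftrightarrow> (\<exists>u \<in> F. b i u > 0)"
  using ice_fork_red_vertex_iff[OF assms] ice_fork_frozen_adjacent[OF assms] by force

lemma ice_fork_not_green_vertex_iff:
  assumes "ice_fork M F b r" "i \<in> M"
  shows "\<not> green_vertex M F b i \<longleftrightarrow> (\<exists>u \<in> F. b i u < 0)"
  using ice_fork_not_red_vertex_iff[OF ice_fork_uminus[OF assms(1)] assms(2)] by simp

definition mixed_vertex :: "'v set \<Rightarrow> 'v set \<Rightarrow> ('v \<Rightarrow> 'v \<Rightarrow> int) \<Rightarrow> 'v \<Rightarrow> bool" where
  "mixed_vertex M F b i \<longleftrightarrow> i \<in> M \<and> \<not> red_vertex M F b i \<and> \<not> green_vertex M F b i"

lemma mixed_vertex_uminus [simp]: "mixed_vertex M F (- b) i \<longleftrightarrow> mixed_vertex M F b i"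
  unfolding mixed_vertex_def by auto

lemma ice_fork_mixed_red_nonneg:
  assumes ice: "ice_fork M F b r" and r: "r \<in> M"
    and i: "mixed_vertex M F b i" "i \<noteq> r" and j: "red_vertex M F b j"
  shows "b i j \<ge> 0"
proof (rule ccontr)
  have "i \<in> M" "j \<in> M"
    using i j unfolding mixed_vertex_def red_vertex_def by auto
  have into_j: "b u j > 0" if "u \<in> F" for u
    using ice_fork_red_vertex_iff[OF ice \<open>j \<in> M\<close>] j that ice_fork_antisym[OF ice, of u j] by auto
  assume "\<not> b i j \<ge> 0"
  then have "b j i > 0"
    using ice_fork_antisym[OF ice, of i j] by linarith
  show False
  proof (cases "j = r")
    case True
    have "\<forall>u \<in> F. b i u > 0"
      using fork_out_in_arrow[OF ice_fork_forkD[OF ice]] \<open>b j i > 0\<close> True into_j \<open>i \<in> M\<close> by blast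
    then show False
      using ice_fork_green_vertex_iff[OF ice \<open>i \<in> M\<close>] i unfolding mixed_vertex_def by blast
  next
    case False
    obtain u where u: "u \<in> F" "b i u > 0"
      using ice_fork_not_red_vertex_iff[OF ice \<open>i \<in> M\<close>] i unfolding mixed_vertex_def by blast
    have "r \<notin> {i, u, j}"
      using False i u r ice_fork_disjoint[OF ice] by auto
    then show False
      using fork_no_3cycle_avoiding_return[OF ice_fork_forkD[OF ice u(1)], of i u j]
        \<open>i \<in> M\<close> \<open>j \<in> M\<close> u into_j \<open>b j i > 0\<close> by blast
  qed
qed

lemma ice_fork_mixed_green_nonpos:
  assumes "ice_fork M F b r" "r \<in> M" "mixed_vertex M F b i" "i \<noteq> r" "green_vertex M F b j"
  shows "b i j \<le> 0"
  using ice_fork_mixed_red_nonneg[OF ice_fork_uminus, of M F b r i j] assms by simp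

lemma ice_fork_return_red_nonpos:
  assumes ice: "ice_fork M F b r" and r: "r \<in> M" "\<not> green_vertex M F b r"
    and j: "red_vertex M F b j"
  shows "b r j \<le> 0"
proof (rule ccontr)
  assume "\<not> b r j \<le> 0"
  have "j \<in> M"
    using j unfolding red_vertex_def by blast
  obtain u where u: "u \<in> F" "b r u < 0"
    using ice_fork_not_green_vertex_iff[OF ice r(1)] r(2) by blast
  then have "b u r > 0"
    using ice_fork_antisym[OF ice, of u r] by linarith
  then have "b j u > 0"
    using fork_out_in_arrow[OF ice_fork_forkD[OF ice u(1)], of j u] \<open>\<not> b r j \<le> 0\<close> \<open>j \<in> M\<close> by auto
  moreover have "b j u < 0"
    using ice_fork_red_vertex_iff[OF ice \<open>j \<in> M\<close>] j u(1) by blast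
  ultimately show False
    by linarith
qed

lemma ice_fork_return_green_nonneg:
  assumes "ice_fork M F b r" "r \<in> M" "\<not> red_vertex M F b r" "green_vertex M F b j"
  shows "b r j \<ge> 0"
  using ice_fork_return_red_nonpos[OF ice_fork_uminus, of M F b r j] assms by simp

lemma ice_fork_no_common_frozen_successor:
  assumes ice: "ice_fork M F b r" and two: "card F \<le> 2"
    and "i \<in> M" "r \<in> M" "i \<noteq> r"
    and i: "\<not> green_vertex M F b i" and r: "\<not> green_vertex M F b r"
    and w: "w \<in> F" "b i w > 0" "b r w > 0"
  shows False
proof -
  obtain v where v: "v \<in> F" "b i v < 0"
    using ice_fork_not_green_vertex_iff[OF ice \<open>i \<in> M\<close>] i by blast
  obtain v' where v': "v' \<in> F" "b r v' < 0"
    using ice_fork_not_green_vertex_iff[OF ice \<open>r \<in> M\<close>] r by blast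
  have "v = v'"
  proof (rule ccontr)
    assume "v \<noteq> v'"
    moreover have "v \<noteq> w" "v' \<noteq> w"
      using v v' w by auto
    moreover have "finite F"
      using ice unfolding ice_fork_def quiver_def by blast
    ultimately have "card {v, v', w} \<le> card F"
      using v v' w by (intro card_mono) auto
    with \<open>v \<noteq> v'\<close> \<open>v \<noteq> w\<close> \<open>v' \<noteq> w\<close> two show False
      by simp
  qed
  then have "b v r > 0"
    using v' ice_fork_antisym[OF ice, of v' r] by simp
  have "b r i \<noteq> 0"
    using fork_adjacent[OF ice_fork_forkD[OF ice v(1)], of r i] assms(3-5) by blast
  then consider "b r i > 0" | "b i r > 0"
    using ice_fork_antisym[OF ice, of i r] by linarith
  then show False
  proof cases
    case 1
    then have "b i v > 0"
      using fork_out_in_arrow[OF ice_fork_forkD[OF ice v(1)], of i v] \<open>b v r > 0\<close> \<open>i \<in> M\<close> by blast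
    with v show False
      by linarith
  next
    case 2
    then have "b w i > 0"
      using fork_out_in_arrow[OF ice_fork_forkD[OF ice w(1)], of w i] w(3) \<open>i \<in> M\<close> by blast
    with w(2) show False
      using ice_fork_antisym[OF ice, of w i] by linarith
  qed
qed

lemma ice_fork_mixed_return_complementary:
  assumes ice: "ice_fork M F b r" and "card F \<le> 2" "r \<in> M"
    and "mixed_vertex M F b i" "mixed_vertex M F b r" "i \<noteq> r"
  shows "complementary F b i r"
  unfolding complementary_def
proof (intro ballI impI)
  fix w
  assume "w \<in> F" and nonzero: "b i w \<noteq> 0 \<and> b r w \<noteq> 0"
  have "i \<in> M"
    using assms(4) unfolding mixed_vertex_def by blast
  have "\<not> (b i w > 0 \<and> b r w > 0)"
    using ice_fork_no_common_frozen_successor[OF ice, of i w] assms \<open>i \<in> M\<close> \<open>w \<in> F\<close>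
    unfolding mixed_vertex_def by blast
  moreover have "\<not> (b i w < 0 \<and> b r w < 0)"
    using ice_fork_no_common_frozen_successor[OF ice_fork_uminus[OF ice], of i w] assms \<open>i \<in> M\<close> \<open>w \<in> F\<close>
    unfolding mixed_vertex_def by auto
  ultimately show "b i w * b r w < 0"
    using nonzero by (auto simp: mult_less_0_iff)
qed

theorem mainTheorem12:
  fixes M F :: "'v set" and b :: "'v \<Rightarrow> 'v \<Rightarrow> int" and r :: 'v
  assumes "ice_fork M F b r"
    and "card F = 2"
  shows "brog M F b"
proof -
  have r: "r \<in> M" and two: "card F \<le> 2"
    using ice_fork_return_mutable[OF assms(1)] assms(2) by simp_all
  define c where "c i = (if red_vertex M F b i then Red else if green_vertex M F b i then Green
    else if i = r then Orange else Blue)" for i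
  have "\<not> (red_vertex M F b i \<and> green_vertex M F b i)" for i
    unfolding red_vertex_def green_vertex_def by force
  then have "c i = Red \<longleftrightarrow> red_vertex M F b i" "c i = Green \<longleftrightarrow> green_vertex M F b i"
    and "i \<in> M \<Longrightarrow> c i = Blue \<longleftrightarrow> mixed_vertex M F b i \<and> i \<noteq> r"
    and "i \<in> M \<Longrightarrow> c i = Orange \<longleftrightarrow> mixed_vertex M F b i \<and> i = r" for i
    unfolding c_def mixed_vertex_def by auto
  then show ?thesis
    unfolding brog_def
    using ice_fork_mixed_red_nonneg[OF assms(1) r] ice_fork_mixed_green_nonpos[OF assms(1) r]
      ice_fork_return_red_nonpos[OF assms(1) r] ice_fork_return_green_nonneg[OF assms(1) r]
      ice_fork_mixed_return_complementary[OF assms(1) two r]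
    by (intro exI[of _ c]) (auto simp: mixed_vertex_def)
qed

end
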